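(* Consider the inner-loop system $x_2(k+1)=A_2x_2(k)+B_2u(k)$ with $x_2\in\mathbb{R}^{n_2}$, together with an inner-loop predictive controller operating as follows. At each time $k$ the inner loop receives a predicted reference-model trajectory $\mathbf{x_f}(k)=[\mathbf{x_f}(k|k),\dots,\mathbf{x_f}(k+N|k)]$ and chooses an input trajectory $\mathbf{u}(k)=[\mathbf{u}(k|k),\dots,\mathbf{u}(k+N-1|k)]$; the predicted states are $\mathbf{x_2}(k|k)=x_2(k)$, $\mathbf{x_2}(k+i+1|k)=A_2\mathbf{x_2}(k+i|k)+B_2\mathbf{u}(k+i|k)$, and $\mathbf{\tilde x}(k+i|k)=\mathbf{x_2}(k+i|k)-\mathbf{x_f}(k+i|k)$; the input applied at time $k$ is $u(k)=\mathbf{u}(k|k)$. Let $G_2=\{\tilde x\in\mathbb{R}^{n_2}:\tilde x^TP\tilde x\le V_2^*\}$ with $P$ symmetric positive definite and $V_2^*>0$, and let $\lambda_2\in[0,1)$. Suppose that, given $\mathbf{x_f}(k)$, a trajectory $\mathbf{u}(k)$ is computed that yields $\mathbf{\tilde x}(k+N|k)\in\lambda_2G_2$. Then there exists $\epsilon_{x_f}^{max}>0$ such that if $\|\mathbf{x_f}(k+N|k+1)-\mathbf{x_f}(k+N|k)\|\le\epsilon_{x_f}^{max}$ and $\mathbf{u}(k+i|k+1)=\mathbf{u}(k+i|k)$ for $i=1,\dots,N-1$, then $\mathbf{\tilde x}(k+N|k+1)\in G_2$.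
   Context: $\lambda_2G_2=\{\lambda_2x:x\in G_2\}$. The notation $(i|k)$ denotes the value of a variable at step $i$ predicted/chosen by the optimization carried out at time $k$; $N\ge 2$ is the prediction horizon. *)

theory Defs
  imports "HOL-Analysis.Analysis"
begin

text \<open>Predicted state trajectory of the inner loop:
  pred_traj A B x0 u i = x2(k+i|k) when x0 = x2(k) and u j = u(k+j|k).\<close>
fun pred_traj :: "real^'n^'n \<Rightarrow> real^'m^'n \<Rightarrow> real^'n \<Rightarrow> (nat \<Rightarrow> real^'m) \<Rightarrow> nat \<Rightarrow> real^'n" where
  "pred_traj A B x0 u 0 = x0"
| "pred_traj A B x0 u (Suc i) = A *v pred_traj A B x0 u i + B *v u i"

definition sym_pos_def :: "real^'n^'n \<Rightarrow> bool" where
  "sym_pos_def P \<longleftrightarrow> transpose P = P \<and> (\<forall>x. x \<noteq> 0 \<longrightarrow> x \<bullet> (P *v x) > 0)"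

definition G2_set :: "real^'n^'n \<Rightarrow> real \<Rightarrow> (real^'n) set" where
  "G2_set P V = {x. x \<bullet> (P *v x) \<le> V}"

end

theory Submission
  imports Defs
begin

text \<open>Shifting the input sequence by one step, starting from the successor state, reproduces
  the old prediction one step later; so the terminal error at time k+1 differs from the one at
  time k only by the change of the reference. Since \<open>\<lambda>\<^sub>2 < 1\<close>, the old error satisfies the
  strict inequality \<open>x\<^sup>T P x < V\<^sub>2\<close>, which defines an open set contained in \<open>G\<^sub>2\<close>; a ball
  around the old error therefore lies in \<open>G\<^sub>2\<close>, and its radius serves as \<open>\<epsilon>\<close>.\<close>

lemma pred_traj_shift:
  assumes "\<forall>j<i. u' j = u (Suc j)"
  shows "pred_traj A B (A *v x0 + B *v u 0) u' i = pred_traj A B x0 u (Suc i)"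
  using assms by (induction i) auto

lemma quadratic_form_scaled_less:
  fixes P :: "real^'n^'n"
  assumes "x \<in> (\<lambda>x. lam *\<^sub>R x) ` G2_set P V" and "0 \<le> lam" "lam < 1" "V > 0"
  shows "x \<bullet> (P *v x) < V"
proof -
  obtain y where y: "y \<bullet> (P *v y) \<le> V" "x = lam *\<^sub>R y"
    using assms(1) unfolding G2_set_def by auto
  have "x \<bullet> (P *v x) = lam\<^sup>2 * (y \<bullet> (P *v y))"
    using y(2) by (simp add: matrix_vector_mult_scaleR power2_eq_square)
  also have "\<dots> \<le> lam\<^sup>2 * V"
    using y(1) by (simp add: mult_left_mono)
  also have "\<dots> < V"
    using assms(2-4) power_strict_mono[of lam 1 2] by simp
  finally show ?thesis .
qed

lemma continuous_on_quadratic_form: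
  fixes P :: "real^'n^'n"
  shows "continuous_on S (\<lambda>x. x \<bullet> (P *v x))"
  by (intro continuous_intros linear_continuous_on matrix_vector_mul_bounded_linear)

lemma open_quadratic_form_sublevel:
  fixes P :: "real^'n^'n"
  shows "open {x. x \<bullet> (P *v x) < V}"
  using continuous_on_quadratic_form[of UNIV P] by (rule open_Collect_less[OF _ continuous_on_const])

lemma cball_subset_G2_set:
  fixes P :: "real^'n^'n"
  assumes "z \<bullet> (P *v z) < V"
  obtains e where "e > 0" "cball z e \<subseteq> G2_set P V"
proof -
  obtain e where "e > 0" "cball z e \<subseteq> {x. x \<bullet> (P *v x) < V}"
    using open_contains_cball open_quadratic_form_sublevel assms by blast
  then show ?thesis
    using that unfolding G2_set_def by fastforce
qed

theorem proposition6:
  fixes A2 :: "real^'n^'n" and B2 :: "real^'m^'n" and P :: "real^'n^'n"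
    and V2 :: real and lam2 :: real and N :: nat
    and x2k x2k1 :: "real^'n" and uk :: "nat \<Rightarrow> real^'m" and xfk :: "nat \<Rightarrow> real^'n"
  assumes "N \<ge> 2"
    and "sym_pos_def P" and "V2 > 0"
    and "0 \<le> lam2" and "lam2 < 1"
    and "x2k1 = A2 *v x2k + B2 *v uk 0"
    and "pred_traj A2 B2 x2k uk N - xfk N \<in> (\<lambda>x. lam2 *\<^sub>R x) ` G2_set P V2"
  shows "\<exists>eps > 0. \<forall>(xfk1 :: nat \<Rightarrow> real^'n) (uk1 :: nat \<Rightarrow> real^'m).
           norm (xfk1 (N - 1) - xfk N) \<le> eps \<and> (\<forall>i\<in>{1..N-1}. uk1 (i - 1) = uk i)
           \<longrightarrow> pred_traj A2 B2 x2k1 uk1 (N - 1) - xfk1 (N - 1) \<in> G2_set P V2"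
proof -
  define z where "z = pred_traj A2 B2 x2k uk N - xfk N"
  have "z \<bullet> (P *v z) < V2"
    using quadratic_form_scaled_less assms(3-5,7) unfolding z_def by blast
  then obtain e where "e > 0" and ball: "cball z e \<subseteq> G2_set P V2"
    by (rule cball_subset_G2_set)
  have "pred_traj A2 B2 x2k1 uk1 (N - 1) - xfk1 (N - 1) \<in> G2_set P V2"
    if "norm (xfk1 (N - 1) - xfk N) \<le> e" and shift: "\<forall>i\<in>{1..N-1}. uk1 (i - 1) = uk i"
    for xfk1 :: "nat \<Rightarrow> real^'n" and uk1 :: "nat \<Rightarrow> real^'m"
  proof -
    have "\<forall>j<N-1. uk1 j = uk (Suc j)"
    proof (intro allI impI)
      fix j assume "j < N - 1"
      then show "uk1 j = uk (Suc j)"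
        using shift[rule_format, of "Suc j"] by simp
    qed
    then have "pred_traj A2 B2 x2k1 uk1 (N - 1) = pred_traj A2 B2 x2k uk N"
      using pred_traj_shift[of "N - 1" uk1 uk A2 B2 x2k] assms(1,6) by (simp add: Suc_diff_1)
    then show ?thesis
      using ball that(1) unfolding z_def by (auto simp: dist_norm norm_minus_commute)
  qed
  then show ?thesis
    using \<open>e > 0\<close> by blast
qed

end
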